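(* Let $\mathcal{H}=\mathbb{C}^{d_1}\otimes\cdots\otimes\mathbb{C}^{d_N}$ with all $d_i\ge2$ and $G=SL(d_1,\mathbb{C})\times\cdots\times SL(d_N,\mathbb{C})$ acting by $g_1\otimes\cdots\otimes g_N$. Suppose $|\Psi\rangle\in\mathcal{H}$ is semistable and $(g_n)_n$ is a sequence in $G$ with $\|g_n|\Psi\rangle\|\to\infty$. Then for every sequence of real numbers $(\phi_n)_n$ such that the limit $\lim_{n\to\infty}\frac{g_n|\Psi\rangle}{\|g_n|\Psi\rangle\|}e^{i\phi_n}$ exists, this limit lies in the null-cone $\mathcal{N}$.
   Context: The null-cone $\mathcal{N}$ is the set of vectors $|\psi\rangle$ with $0\in\overline{G|\psi\rangle}$ (standard topology); a vector is semistable if it is not in $\mathcal{N}$. *)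

theory Defs
  imports "HOL-Analysis.Function_Topology" "Jordan_Normal_Form.Determinant"
begin

text \<open>Hilbert space H = C^{d_0} (x) ... (x) C^{d_{N-1}}, realised as complex-valued
functions on multi-indices i :: nat => nat with i k < d k for k < N and i k = 0 for k >= N,
extended by zero outside this finite index set.\<close>

definition midx :: "nat \<Rightarrow> (nat \<Rightarrow> nat) \<Rightarrow> (nat \<Rightarrow> nat) set" where
  "midx N d = {i. (\<forall>k<N. i k < d k) \<and> (\<forall>k\<ge>N. i k = 0)}"

definition tensor_space :: "nat \<Rightarrow> (nat \<Rightarrow> nat) \<Rightarrow> ((nat \<Rightarrow> nat) \<Rightarrow> complex) set" where
  "tensor_space N d = {\<psi>. \<forall>i. i \<notin> midx N d \<longrightarrow> \<psi> i = 0}"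

definition tnorm :: "nat \<Rightarrow> (nat \<Rightarrow> nat) \<Rightarrow> ((nat \<Rightarrow> nat) \<Rightarrow> complex) \<Rightarrow> real" where
  "tnorm N d \<psi> = sqrt (\<Sum>i\<in>midx N d. (cmod (\<psi> i))\<^sup>2)"

definition SLgroup :: "nat \<Rightarrow> (nat \<Rightarrow> nat) \<Rightarrow> (nat \<Rightarrow> complex mat) set" where
  "SLgroup N d = {g. \<forall>k<N. g k \<in> carrier_mat (d k) (d k) \<and> det (g k) = 1}"

definition act :: "nat \<Rightarrow> (nat \<Rightarrow> nat) \<Rightarrow> (nat \<Rightarrow> complex mat) \<Rightarrow> ((nat \<Rightarrow> nat) \<Rightarrow> complex)
    \<Rightarrow> ((nat \<Rightarrow> nat) \<Rightarrow> complex)" where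
  "act N d g \<psi> = (\<lambda>i. if i \<in> midx N d
      then (\<Sum>j\<in>midx N d. (\<Prod>k<N. g k $$ (i k, j k)) * \<psi> j) else 0)"

definition null_cone :: "nat \<Rightarrow> (nat \<Rightarrow> nat) \<Rightarrow> ((nat \<Rightarrow> nat) \<Rightarrow> complex) set" where
  "null_cone N d = {\<psi> \<in> tensor_space N d.
      \<forall>e>0. \<exists>g\<in>SLgroup N d. tnorm N d (act N d g \<psi>) < e}"

definition semistable :: "nat \<Rightarrow> (nat \<Rightarrow> nat) \<Rightarrow> ((nat \<Rightarrow> nat) \<Rightarrow> complex) \<Rightarrow> bool" where
  "semistable N d \<psi> \<longleftrightarrow> \<psi> \<in> tensor_space N d \<and> \<psi> \<notin> null_cone N d"

end

theory Submission
  imports Defs "HOL-Analysis.Topology_Euclidean_Space"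
begin

text \<open>Every factor of an element of the group is written as
U D V with U, V unitary and D positive diagonal of determinant one. This singular value
decomposition comes from maximising the sum over a of a |g* F_a|^2 over orthonormal frames F:
at a maximum the images g* F_a are pairwise orthogonal, since otherwise a rotation in the plane
of two frame vectors would increase the sum. Along a subsequence the unitary parts converge to
some U. Coordinate i of U* L is then the limit of c_n D_n,i (V_n Psi)_i, where c_n -> 0 is the
normalisation and D_n,i the product of the singular values picked by the multi-index i. As
(V_n Psi)_i stays bounded, every nonzero coordinate forces D_n,i to grow at least like 1/|c_n|,
so the group elements D_n^-1 U* (one diagonal entry corrected by a unit-modulus factor to make
the determinant one) shrink L to norm O(|c_n|).\<close>

section \<open>Multi-indices\<close>

lemma midx_Suc: "midx (Suc N) d = (\<lambda>(j,c). j(N:=c)) ` (midx N d \<times> {..<d N})"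
proof
  show "midx (Suc N) d \<subseteq> (\<lambda>(j,c). j(N:=c)) ` (midx N d \<times> {..<d N})"
  proof
    fix i assume i: "i \<in> midx (Suc N) d"
    have "i = (\<lambda>(j,c). j(N:=c)) (i(N:=0), i N)" by auto
    moreover have "(i(N:=0), i N) \<in> midx N d \<times> {..<d N}"
      using i unfolding midx_def by auto
    ultimately show "i \<in> (\<lambda>(j,c). j(N:=c)) ` (midx N d \<times> {..<d N})" by blast
  qed
  show "(\<lambda>(j,c). j(N:=c)) ` (midx N d \<times> {..<d N}) \<subseteq> midx (Suc N) d"
    unfolding midx_def by (auto simp: less_Suc_eq)
qed

lemma inj_on_midx_extend: "inj_on (\<lambda>(j,c). j(N:=c)) (midx N d \<times> {..<d N})"
proof (rule inj_onI, clarify)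
  fix j c j' c' assume j: "j \<in> midx N d" "j' \<in> midx N d" and eq: "j(N:=c) = j'(N:=c')"
  have "j = j'"
  proof
    fix k show "j k = j' k"
      using j fun_cong[OF eq, of k] unfolding midx_def by (cases "k = N") auto
  qed
  moreover have "c = c'" using eq by (metis fun_upd_same)
  ultimately show "j = j' \<and> c = c'" by simp
qed

lemma midx_0: "midx 0 d = {\<lambda>_. 0}"
  unfolding midx_def by auto

lemma prod_sum_midx:
  fixes f :: "nat \<Rightarrow> nat \<Rightarrow> 'a::comm_semiring_1"
  shows "(\<Prod>k<N. \<Sum>c<d k. f k c) = (\<Sum>j\<in>midx N d. \<Prod>k<N. f k (j k))"
proof (induction N)
  case (Suc N)
  have "(\<Prod>k<Suc N. \<Sum>c<d k. f k c) = (\<Sum>j\<in>midx N d. \<Prod>k<N. f k (j k)) * (\<Sum>c<d N. f N c)"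
    using Suc by simp
  also have "\<dots> = (\<Sum>(j,c)\<in>midx N d \<times> {..<d N}. (\<Prod>k<N. f k (j k)) * f N c)"
    by (simp add: sum_product sum.cartesian_product)
  also have "\<dots> = (\<Sum>(j,c)\<in>midx N d \<times> {..<d N}. \<Prod>k<Suc N. f k ((j(N:=c)) k))"
    by (intro sum.cong refl) (auto intro!: prod.cong)
  also have "\<dots> = (\<Sum>i\<in>midx (Suc N) d. \<Prod>k<Suc N. f k (i k))"
    unfolding midx_Suc by (subst sum.reindex[OF inj_on_midx_extend]) (simp add: case_prod_unfold)
  finally show ?case .
qed (simp add: midx_0)

lemma bounded_family_convergent_subseq:
  fixes X :: "nat \<Rightarrow> 'i \<Rightarrow> 'a::{real_normed_vector, heine_borel}"
  assumes "finite I" "\<forall>n. \<forall>i\<in>I. norm (X n i) \<le> B"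
  shows "\<exists>r Y. strict_mono r \<and> (\<forall>i\<in>I. (\<lambda>n. X (r n) i) \<longlonglongrightarrow> Y i)"
  using assms
proof (induction I rule: finite_induct)
  case empty
  show ?case by (rule exI[of _ id]) (auto simp: strict_mono_def)
next
  case (insert a I)
  then obtain r Y where r: "strict_mono r" and Y: "\<forall>i\<in>I. (\<lambda>n. X (r n) i) \<longlonglongrightarrow> Y i"
    by auto
  have "range (\<lambda>n. X (r n) a) \<subseteq> cball 0 B" using insert.prems by auto
  then have "bounded (range (\<lambda>n. X (r n) a))" by (rule bounded_subset[OF bounded_cball])
  then obtain l s where s: "strict_mono s" and l: "((\<lambda>n. X (r n) a) \<circ> s) \<longlonglongrightarrow> l"
    using bounded_imp_convergent_subsequence by blast
  have "(\<lambda>n. X ((r \<circ> s) n) i) \<longlonglongrightarrow> (Y(a := l)) i" if i: "i \<in> insert a I" for i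
  proof (cases "i = a")
    case True
    then show ?thesis using l by (simp add: o_def)
  next
    case False
    then have "i \<in> I" using i by simp
    with Y have "((\<lambda>n. X (r n) i) \<circ> s) \<longlonglongrightarrow> Y i" by (blast intro: LIMSEQ_subseq_LIMSEQ s)
    with False show ?thesis by (simp add: o_def)
  qed
  moreover have "strict_mono (r \<circ> s)" using r s by (rule strict_mono_o)
  ultimately show ?case by blast
qed

section \<open>Unitary and diagonal matrices\<close>

interpretation cnj_hom: comm_ring_hom cnj
  by unfold_locales simp_all

definition mat_adj :: "complex mat \<Rightarrow> complex mat" where
  "mat_adj A = transpose_mat (map_mat cnj A)"

lemma mat_adj_carrier [simp]: "A \<in> carrier_mat m n \<Longrightarrow> mat_adj A \<in> carrier_mat n m"
  unfolding mat_adj_def by auto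

lemma mat_adj_dim [simp]: "dim_row (mat_adj A) = dim_col A" "dim_col (mat_adj A) = dim_row A"
  unfolding mat_adj_def by auto

lemma index_mat_adj [simp]:
  "i < dim_col A \<Longrightarrow> j < dim_row A \<Longrightarrow> mat_adj A $$ (i,j) = cnj (A $$ (j,i))"
  unfolding mat_adj_def by auto

lemma mat_adj_mat_adj [simp]: "mat_adj (mat_adj A) = A"
  by (rule eq_matI) auto

lemma det_mat_adj: "A \<in> carrier_mat n n \<Longrightarrow> det (mat_adj A) = cnj (det A)"
  unfolding mat_adj_def by (simp add: det_transpose[of _ n])

lemma index_mult_mat_sum:
  "A \<in> carrier_mat n m \<Longrightarrow> B \<in> carrier_mat m p \<Longrightarrow> a < n \<Longrightarrow> b < p \<Longrightarrow>
    (A * B) $$ (a,b) = (\<Sum>c<m. A $$ (a,c) * B $$ (c,b))"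
  by (simp add: scalar_prod_def atLeast0LessThan)

definition unitary_mat :: "nat \<Rightarrow> complex mat \<Rightarrow> bool" where
  "unitary_mat m U \<longleftrightarrow> U \<in> carrier_mat m m \<and> mat_adj U * U = 1\<^sub>m m"

lemma unitary_mat_mat_adj:
  assumes "unitary_mat m U"
  shows "unitary_mat m (mat_adj U)"
proof -
  have "U * mat_adj U = 1\<^sub>m m"
    using assms mat_mult_left_right_inverse[of "mat_adj U" m U] unfolding unitary_mat_def by auto
  then show ?thesis using assms unfolding unitary_mat_def by simp
qed

lemma unitary_mat_det:
  assumes "unitary_mat m U"
  shows "cmod (det U) = 1"
proof -
  have U: "U \<in> carrier_mat m m" "mat_adj U * U = 1\<^sub>m m"
    using assms unfolding unitary_mat_def by auto
  have "cnj (det U) * det U = 1"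
    using U det_mult[of "mat_adj U" m U] by (simp add: det_mat_adj[OF U(1)])
  then have "(cmod (det U))\<^sup>2 = 1"
    by (metis complex_norm_square mult.commute of_real_eq_1_iff)
  then show ?thesis using norm_ge_zero[of "det U"] by (auto simp: power2_eq_1_iff)
qed

lemma unitary_mat_entry_le_1:
  assumes U: "unitary_mat m U" and "i < m" "j < m"
  shows "cmod (U $$ (i,j)) \<le> 1"
proof -
  have Uc: "U \<in> carrier_mat m m" using U unfolding unitary_mat_def by simp
  have "complex_of_real (\<Sum>c<m. (cmod (U $$ (c,j)))\<^sup>2) = (\<Sum>c<m. cnj (U $$ (c,j)) * U $$ (c,j))"
    unfolding of_real_sum by (intro sum.cong refl) (metis complex_norm_square mult.commute)
  also have "\<dots> = (mat_adj U * U) $$ (j,j)"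
    by (subst index_mult_mat_sum[of _ m m]) (use Uc \<open>j < m\<close> in auto)
  also have "\<dots> = 1"
    using U \<open>j < m\<close> unfolding unitary_mat_def by (metis index_one_mat(1))
  finally have "(\<Sum>c<m. (cmod (U $$ (c,j)))\<^sup>2) = 1" by (simp only: of_real_eq_1_iff)
  moreover have "(cmod (U $$ (i,j)))\<^sup>2 \<le> (\<Sum>c<m. (cmod (U $$ (c,j)))\<^sup>2)"
    using \<open>i < m\<close> by (intro member_le_sum) auto
  ultimately show ?thesis by (simp add: abs_square_le_1)
qed

lemma unitary_mat_limit:
  assumes U: "\<forall>n. unitary_mat m (U n)" and W: "W \<in> carrier_mat m m"
    and lim: "\<forall>a<m. \<forall>b<m. (\<lambda>n. U n $$ (a,b)) \<longlonglongrightarrow> W $$ (a,b)"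
  shows "unitary_mat m W"
  unfolding unitary_mat_def
proof (intro conjI W eq_matI)
  fix a b assume "a < dim_row (1\<^sub>m m)" "b < dim_col (1\<^sub>m m)"
  then have ab: "a < m" "b < m" by auto
  have entry: "(mat_adj A * A) $$ (a,b) = (\<Sum>c<m. cnj (A $$ (c,a)) * A $$ (c,b))"
    if "A \<in> carrier_mat m m" for A
    by (subst index_mult_mat_sum[of _ m m]) (use that ab in auto)
  have Uc: "U n \<in> carrier_mat m m" for n using U unfolding unitary_mat_def by simp
  have "(\<lambda>n. (mat_adj (U n) * U n) $$ (a,b)) \<longlonglongrightarrow> (mat_adj W * W) $$ (a,b)"
    unfolding entry[OF W] entry[OF Uc] using lim ab by (auto intro!: tendsto_intros)
  moreover have "(\<lambda>n. (mat_adj (U n) * U n) $$ (a,b)) = (\<lambda>n. 1\<^sub>m m $$ (a,b))"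
    using U unfolding unitary_mat_def by simp
  ultimately show "(mat_adj W * W) $$ (a,b) = 1\<^sub>m m $$ (a,b)"
    using LIMSEQ_unique tendsto_const by metis
qed (use W in auto)

lemma tendsto_index_mat_adj:
  assumes U: "\<forall>n. U n \<in> carrier_mat m m" and W: "W \<in> carrier_mat m m"
    and lim: "\<forall>a<m. \<forall>b<m. (\<lambda>n. U n $$ (a,b)) \<longlonglongrightarrow> W $$ (a,b)"
  shows "\<forall>a<m. \<forall>b<m. (\<lambda>n. mat_adj (U n) $$ (a,b)) \<longlonglongrightarrow> mat_adj W $$ (a,b)"
proof (intro allI impI)
  fix a b assume ab: "a < m" "b < m"
  have "dim_row (U n) = m" "dim_col (U n) = m" for n using U by auto
  moreover have "dim_row W = m" "dim_col W = m" using W by auto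
  ultimately have "(\<lambda>n. mat_adj (U n) $$ (a,b)) = (\<lambda>n. cnj (U n $$ (b,a)))"
    "mat_adj W $$ (a,b) = cnj (W $$ (b,a))"
    using ab by auto
  then show "(\<lambda>n. mat_adj (U n) $$ (a,b)) \<longlonglongrightarrow> mat_adj W $$ (a,b)"
    using lim ab by (auto intro: tendsto_cnj)
qed

lemma det_mat_diag: "det (mat_diag m e) = (\<Prod>i<m. e i)"
proof -
  have "upper_triangular (mat_diag m e)" unfolding mat_diag_def upper_triangular_def by auto
  then have "det (mat_diag m e) = prod_list (diag_mat (mat_diag m e))"
    by (rule det_upper_triangular[of _ m]) simp
  also have "\<dots> = prod_list (map e [0..<m])"
    unfolding diag_mat_def mat_diag_def by (intro arg_cong[where f=prod_list]) auto
  also have "\<dots> = (\<Prod>i<m. e i)"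
    by (simp add: prod.distinct_set_conv_list[symmetric] atLeast0LessThan)
  finally show ?thesis .
qed

lemma index_mat_diag_mult:
  assumes "V \<in> carrier_mat m n" "a < m" "b < n"
  shows "(mat_diag m e * V) $$ (a,b) = e a * V $$ (a,b)"
  unfolding mat_diag_mult_left[OF assms(1)] using assms(2,3) by simp

section \<open>Singular value decomposition\<close>

definition cinner :: "nat \<Rightarrow> (nat \<Rightarrow> complex) \<Rightarrow> (nat \<Rightarrow> complex) \<Rightarrow> complex" where
  "cinner m x y = (\<Sum>i<m. cnj (x i) * y i)"

definition csqnorm :: "nat \<Rightarrow> (nat \<Rightarrow> complex) \<Rightarrow> real" where
  "csqnorm m x = (\<Sum>i<m. (cmod (x i))\<^sup>2)"

definition adj_apply :: "complex mat \<Rightarrow> nat \<Rightarrow> (nat \<Rightarrow> complex) \<Rightarrow> nat \<Rightarrow> complex" where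
  "adj_apply g m x = (\<lambda>j. \<Sum>i<m. cnj (g $$ (i,j)) * x i)"

definition orthonormal_frame :: "nat \<Rightarrow> (nat \<Rightarrow> nat \<Rightarrow> complex) \<Rightarrow> bool" where
  "orthonormal_frame m F \<longleftrightarrow> (\<forall>a<m. \<forall>b<m. cinner m (F a) (F b) = (if a = b then 1 else 0))"

definition frame_mat :: "nat \<Rightarrow> (nat \<Rightarrow> nat \<Rightarrow> complex) \<Rightarrow> complex mat" where
  "frame_mat m F = Matrix.mat m m (\<lambda>(i,a). F a i)"

definition frame_weight :: "complex mat \<Rightarrow> nat \<Rightarrow> (nat \<Rightarrow> nat \<Rightarrow> complex) \<Rightarrow> real" where
  "frame_weight g m F = (\<Sum>a<m. real a * csqnorm m (adj_apply g m (F a)))"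

lemma cinner_lincomb_left:
  "cinner m (\<lambda>i. \<alpha> * x i + \<beta> * y i) u = cnj \<alpha> * cinner m x u + cnj \<beta> * cinner m y u"
  unfolding cinner_def by (simp add: sum.distrib sum_distrib_left algebra_simps)

lemma cinner_lincomb_right:
  "cinner m x (\<lambda>i. \<gamma> * u i + \<delta> * v i) = \<gamma> * cinner m x u + \<delta> * cinner m x v"
  unfolding cinner_def by (simp add: sum.distrib sum_distrib_left algebra_simps)

lemma cinner_self: "cinner m x x = complex_of_real (csqnorm m x)"
  unfolding cinner_def csqnorm_def of_real_sum
  by (intro sum.cong refl) (metis complex_norm_square mult.commute)

lemma csqnorm_nonneg: "0 \<le> csqnorm m x"
  unfolding csqnorm_def by (simp add: sum_nonneg)

lemma cmod_add_square: "(cmod (p + q))\<^sup>2 = (cmod p)\<^sup>2 + (cmod q)\<^sup>2 + 2 * Re (cnj p * q)"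
  unfolding cmod_power2 by (simp add: power2_eq_square algebra_simps)

lemma csqnorm_lincomb:
  "csqnorm m (\<lambda>i. \<alpha> * u i + \<beta> * v i) =
     (cmod \<alpha>)\<^sup>2 * csqnorm m u + (cmod \<beta>)\<^sup>2 * csqnorm m v + 2 * Re (cnj \<alpha> * \<beta> * cinner m u v)"
proof -
  have reorder: "cnj (\<alpha> * u i) * (\<beta> * v i) = cnj \<alpha> * \<beta> * (cnj (u i) * v i)" for i
    by (simp add: mult_ac)
  have "csqnorm m (\<lambda>i. \<alpha> * u i + \<beta> * v i) = (\<Sum>i<m. (cmod \<alpha>)\<^sup>2 * (cmod (u i))\<^sup>2 +
      (cmod \<beta>)\<^sup>2 * (cmod (v i))\<^sup>2 + 2 * Re (cnj \<alpha> * \<beta> * (cnj (u i) * v i)))"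
    unfolding csqnorm_def cmod_add_square reorder
    by (simp add: norm_mult power_mult_distrib del: times_complex.sel)
  then show ?thesis
    unfolding csqnorm_def cinner_def
    by (simp add: sum.distrib sum_distrib_left del: times_complex.sel)
qed

lemma adj_apply_lincomb:
  "adj_apply g m (\<lambda>i. \<alpha> * x i + \<beta> * y i) =
     (\<lambda>j. \<alpha> * adj_apply g m x j + \<beta> * adj_apply g m y j)"
  unfolding adj_apply_def by (simp add: sum.distrib sum_distrib_left algebra_simps)

lemma frame_mat_carrier [simp]: "frame_mat m F \<in> carrier_mat m m"
  unfolding frame_mat_def by simp

lemma frame_mat_dim [simp]: "dim_row (frame_mat m F) = m" "dim_col (frame_mat m F) = m"
  unfolding frame_mat_def by simp_all

lemma orthonormal_frame_iff_unitary: "orthonormal_frame m F \<longleftrightarrow> unitary_mat m (frame_mat m F)"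
proof -
  have entry: "(mat_adj (frame_mat m F) * frame_mat m F) $$ (a,b) = cinner m (F a) (F b)"
    if "a < m" "b < m" for a b
    by (subst index_mult_mat_sum[of _ m m]) (use that in \<open>auto simp: frame_mat_def cinner_def\<close>)
  show ?thesis
    unfolding orthonormal_frame_def unitary_mat_def
  proof safe
    assume "\<forall>a<m. \<forall>b<m. cinner m (F a) (F b) = (if a = b then 1 else 0)"
    then show "mat_adj (frame_mat m F) * frame_mat m F = 1\<^sub>m m"
      by (intro eq_matI) (auto simp: entry simp del: index_mult_mat(1))
  next
    fix a b assume "mat_adj (frame_mat m F) * frame_mat m F = 1\<^sub>m m" "a < m" "b < m"
    then show "cinner m (F a) (F b) = (if a = b then 1 else 0)"
      by (metis entry index_one_mat(1))
  qed simp
qed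

lemma orthonormal_frame_entry_le_1:
  "orthonormal_frame m F \<Longrightarrow> a < m \<Longrightarrow> i < m \<Longrightarrow> cmod (F a i) \<le> 1"
  using unitary_mat_entry_le_1[of m "frame_mat m F" i a]
  by (simp add: orthonormal_frame_iff_unitary frame_mat_def)

lemma orthonormal_frame_limit:
  assumes "\<forall>n. orthonormal_frame m (X n)" "\<forall>a<m. \<forall>i<m. (\<lambda>n. X n a i) \<longlonglongrightarrow> X0 a i"
  shows "orthonormal_frame m X0"
  using assms unitary_mat_limit[of m "\<lambda>n. frame_mat m (X n)" "frame_mat m X0"]
  by (simp add: orthonormal_frame_iff_unitary frame_mat_def)

lemma cinner_frame_pair:
  assumes F: "orthonormal_frame m F" and ab: "a < m" "b < m" "a \<noteq> b"
  shows "cinner m (\<lambda>i. \<alpha> * F a i + \<beta> * F b i) (\<lambda>i. \<gamma> * F a i + \<delta> * F b i) =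
           cnj \<alpha> * \<gamma> + cnj \<beta> * \<delta>"
    and "e < m \<Longrightarrow> e \<noteq> a \<Longrightarrow> e \<noteq> b \<Longrightarrow> cinner m (\<lambda>i. \<alpha> * F a i + \<beta> * F b i) (F e) = 0"
    and "e < m \<Longrightarrow> e \<noteq> a \<Longrightarrow> e \<noteq> b \<Longrightarrow> cinner m (F e) (\<lambda>i. \<alpha> * F a i + \<beta> * F b i) = 0"
  using assms unfolding orthonormal_frame_def
  by (simp_all add: cinner_lincomb_left cinner_lincomb_right)

lemma orthonormal_frame_rotate:
  fixes c s :: real
  assumes F: "orthonormal_frame m F" and ab: "a < m" "b < m" "a \<noteq> b"
    and cs: "c\<^sup>2 + s\<^sup>2 = 1" and z: "cmod z = 1"
  shows "orthonormal_frame m (F(a := (\<lambda>i. of_real c * F a i + (of_real s * z) * F b i),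
                                b := (\<lambda>i. - (of_real s * cnj z) * F a i + of_real c * F b i)))"
    (is "orthonormal_frame m (F(a := ?P, b := ?Q))")
proof -
  have zz: "cnj z * z = 1" using z by (metis complex_norm_square mult.commute of_real_1 power_one)
  have "cinner m ?P ?P = of_real (c\<^sup>2) + of_real (s\<^sup>2) * (cnj z * z)"
    and "cinner m ?Q ?Q = of_real (c\<^sup>2) + of_real (s\<^sup>2) * (cnj z * z)"
    unfolding cinner_frame_pair(1)[OF F ab] by (simp_all add: power2_eq_square mult_ac add_ac)
  moreover have "complex_of_real (c\<^sup>2) + of_real (s\<^sup>2) = 1"
    using cs by (metis of_real_1 of_real_add)
  ultimately have PP: "cinner m ?P ?P = 1" and QQ: "cinner m ?Q ?Q = 1"
    unfolding zz by simp_all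
  have PQ: "cinner m ?P ?Q = 0" and QP: "cinner m ?Q ?P = 0"
    unfolding cinner_frame_pair(1)[OF F ab] by (simp_all add: mult_ac)
  have other: "cinner m ?P (F e) = 0" "cinner m (F e) ?P = 0"
    "cinner m ?Q (F e) = 0" "cinner m (F e) ?Q = 0"
    if "e < m" "e \<noteq> a" "e \<noteq> b" for e
    by (rule cinner_frame_pair(2,3)[OF F ab that])+
  show ?thesis
    unfolding orthonormal_frame_def
  proof (intro allI impI)
    fix k l assume k: "k < m" and l: "l < m"
    have Fkl: "cinner m (F k) (F l) = (if k = l then 1 else 0)"
      using F k l unfolding orthonormal_frame_def by blast
    show "cinner m ((F(a := ?P, b := ?Q)) k) ((F(a := ?P, b := ?Q)) l) = (if k = l then 1 else 0)"
      using ab PP QQ PQ QP other[OF k] other[OF l] Fkl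
      by (cases "k = a"; cases "k = b"; cases "l = a"; cases "l = b") simp_all
  qed
qed

lemma frame_weight_update:
  assumes "a < m" "b < m" "a \<noteq> b"
  shows "frame_weight g m (F(a := P, b := Q)) - frame_weight g m F =
    real a * (csqnorm m (adj_apply g m P) - csqnorm m (adj_apply g m (F a))) +
    real b * (csqnorm m (adj_apply g m Q) - csqnorm m (adj_apply g m (F b)))"
proof -
  define t where "t G k = real k * csqnorm m (adj_apply g m (G k))" for G k
  have "frame_weight g m (F(a := P, b := Q)) - frame_weight g m F =
      (\<Sum>k<m. t (F(a := P, b := Q)) k - t F k)"
    unfolding frame_weight_def t_def by (simp add: sum_subtractf)
  also have "\<dots> = (\<Sum>k\<in>{a,b}. t (F(a := P, b := Q)) k - t F k)"
    using assms by (intro sum.mono_neutral_right) (auto simp: t_def)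
  finally show ?thesis using assms by (simp add: t_def algebra_simps)
qed

lemma unit_phase_aligning:
  fixes \<sigma> :: real
  assumes q: "q \<noteq> 0" and \<sigma>: "\<bar>\<sigma>\<bar> = 1"
  shows "\<exists>z. cmod z = 1 \<and> Re (z * q) = \<sigma> * cmod q"
proof -
  define z where "z = complex_of_real (\<sigma> / cmod q) * cnj q"
  have "cnj q * q = complex_of_real ((cmod q)\<^sup>2)"
    by (metis complex_norm_square mult.commute)
  then have "z * q = complex_of_real (\<sigma> / cmod q) * complex_of_real ((cmod q)\<^sup>2)"
    unfolding z_def by (simp add: mult.assoc)
  moreover have "cmod z = 1" using q \<sigma> unfolding z_def by (simp add: norm_mult norm_divide)
  ultimately show ?thesis using q by (intro exI[of _ z]) (simp add: power2_eq_square)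
qed

lemma small_rotation_exists:
  fixes p r :: real
  assumes p: "0 < p" and r: "0 \<le> r"
  shows "\<exists>c s. c\<^sup>2 + s\<^sup>2 = 1 \<and> 0 < s \<and> s * r < 2 * c * p"
proof -
  define n where "n = sqrt ((p + r)\<^sup>2 + p\<^sup>2)"
  have pos: "(p + r)\<^sup>2 + p\<^sup>2 > 0" using p by (simp add: add_nonneg_pos)
  then have n: "n > 0" unfolding n_def by simp
  have "((p + r) / n)\<^sup>2 + (p / n)\<^sup>2 = 1"
    using pos p unfolding n_def by (simp add: power_divide add_divide_distrib[symmetric])
  moreover have "p * r < 2 * (p + r) * p"
  proof -
    have "0 < p * (2 * p + r)" using p r by simp
    then show ?thesis by (simp add: algebra_simps)
  qed
  then have "p / n * r < 2 * ((p + r) / n) * p"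
    using n by (simp add: field_simps)
  ultimately show ?thesis using p n by (intro exI[of _ "(p + r) / n"] exI[of _ "p / n"]) simp
qed

lemma csqnorm_rotate:
  fixes c s :: real
  assumes z: "cmod z = 1"
  shows "csqnorm m (\<lambda>j. of_real c * u j + (of_real s * z) * v j) =
           c\<^sup>2 * csqnorm m u + s\<^sup>2 * csqnorm m v + 2 * c * s * Re (z * cinner m u v)"
    and "csqnorm m (\<lambda>j. - (of_real s * cnj z) * u j + of_real c * v j) =
           s\<^sup>2 * csqnorm m u + c\<^sup>2 * csqnorm m v - 2 * c * s * Re (z * cinner m u v)"
proof -
  have "cnj (complex_of_real c) * (of_real s * z) * cinner m u v = (c * s) *\<^sub>R (z * cinner m u v)"
    "cnj (- (complex_of_real s * cnj z)) * of_real c * cinner m u v =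
       (- (c * s)) *\<^sub>R (z * cinner m u v)"
    by (simp_all add: scaleR_conv_of_real mult_ac)
  then show "csqnorm m (\<lambda>j. of_real c * u j + (of_real s * z) * v j) =
           c\<^sup>2 * csqnorm m u + s\<^sup>2 * csqnorm m v + 2 * c * s * Re (z * cinner m u v)"
    and "csqnorm m (\<lambda>j. - (of_real s * cnj z) * u j + of_real c * v j) =
           s\<^sup>2 * csqnorm m u + c\<^sup>2 * csqnorm m v - 2 * c * s * Re (z * cinner m u v)"
    unfolding csqnorm_lincomb scaleR_complex.sel using z by (simp_all add: norm_mult)
qed

lemma frame_weight_increase:
  assumes F: "orthonormal_frame m F" and ab: "a < m" "b < m" "a \<noteq> b"
    and q0: "cinner m (adj_apply g m (F a)) (adj_apply g m (F b)) \<noteq> 0"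
  shows "\<exists>F'. orthonormal_frame m F' \<and> frame_weight g m F < frame_weight g m F'"
proof -
  define u v where "u = adj_apply g m (F a)" and "v = adj_apply g m (F b)"
  define q A B where "q = cinner m u v" and "A = csqnorm m u" and "B = csqnorm m v"
  note fold = u_def[symmetric] v_def[symmetric] q_def[symmetric] A_def[symmetric] B_def[symmetric]
  define w :: real where "w = real a - real b"
  define sg :: real where "sg = (if w > 0 then 1 else -1)"
  have wsg: "w * sg = \<bar>w\<bar>" and w: "\<bar>w\<bar> > 0"
    using ab unfolding sg_def w_def by auto
  have q: "q \<noteq> 0" using q0 unfolding q_def u_def v_def .
  \<comment> \<open>z turns the cross term into a real number with the sign of a - b\<close>
  have "\<bar>sg\<bar> = 1" unfolding sg_def by simp
  then obtain z where z: "cmod z = 1" and zq: "Re (z * q) = sg * cmod q"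
    using unit_phase_aligning[OF q] by blast
  obtain c s where cs: "c\<^sup>2 + s\<^sup>2 = 1" and s: "0 < s" and angle: "s * \<bar>A - B\<bar> < 2 * c * cmod q"
    using small_rotation_exists[of "cmod q" "\<bar>A - B\<bar>"] q by auto
  define P where "P = (\<lambda>i. of_real c * F a i + (of_real s * z) * F b i)"
  define Q where "Q = (\<lambda>i. - (of_real s * cnj z) * F a i + of_real c * F b i)"
  have frame: "orthonormal_frame m (F(a := P, b := Q))"
    unfolding P_def Q_def using orthonormal_frame_rotate[OF F ab cs z] .
  have c2: "c\<^sup>2 = 1 - s\<^sup>2" using cs by simp
  have "frame_weight g m (F(a := P, b := Q)) - frame_weight g m F =
      w * (s\<^sup>2 * (B - A)) + 2 * c * s * (w * sg) * cmod q"
    unfolding frame_weight_update[OF ab] P_def Q_def adj_apply_lincomb csqnorm_rotate[OF z]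
      fold zq c2 w_def
    by (simp add: algebra_simps)
  also have "\<dots> \<ge> s * \<bar>w\<bar> * (2 * c * cmod q - s * \<bar>A - B\<bar>)"
  proof -
    have "\<bar>w * (s\<^sup>2 * (B - A))\<bar> = s\<^sup>2 * \<bar>w\<bar> * \<bar>A - B\<bar>"
      by (simp add: abs_mult abs_minus_commute)
    then have "w * (s\<^sup>2 * (B - A)) \<ge> - (s\<^sup>2 * \<bar>w\<bar> * \<bar>A - B\<bar>)" by linarith
    then show ?thesis unfolding wsg by (simp add: algebra_simps power2_eq_square)
  qed
  moreover have "s * \<bar>w\<bar> * (2 * c * cmod q - s * \<bar>A - B\<bar>) > 0"
    using s w angle by (simp add: mult_pos_pos)
  ultimately have "frame_weight g m F < frame_weight g m (F(a := P, b := Q))" by linarith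
  with frame show ?thesis by blast
qed

lemma frame_weight_le:
  assumes "orthonormal_frame m F"
  shows "frame_weight g m F \<le> (\<Sum>a<m. real a * (\<Sum>j<m. (\<Sum>i<m. cmod (g $$ (i,j)))\<^sup>2))"
  unfolding frame_weight_def
proof (intro sum_mono mult_left_mono)
  fix a assume a: "a \<in> {..<m}"
  have "cmod (adj_apply g m (F a) j) \<le> (\<Sum>i<m. cmod (g $$ (i,j)))" for j
  proof -
    have "cmod (adj_apply g m (F a) j) \<le> (\<Sum>i<m. cmod (cnj (g $$ (i,j)) * F a i))"
      unfolding adj_apply_def by (rule norm_sum)
    also have "\<dots> \<le> (\<Sum>i<m. cmod (g $$ (i,j)))"
      using orthonormal_frame_entry_le_1[OF assms] a
      by (intro sum_mono) (auto simp: norm_mult intro: mult_left_le)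
    finally show ?thesis .
  qed
  then show "csqnorm m (adj_apply g m (F a)) \<le> (\<Sum>j<m. (\<Sum>i<m. cmod (g $$ (i,j)))\<^sup>2)"
    unfolding csqnorm_def by (intro sum_mono power_mono) auto
qed simp

lemma frame_weight_tendsto:
  "\<forall>a<m. \<forall>i<m. (\<lambda>n. X n a i) \<longlonglongrightarrow> X0 a i \<Longrightarrow>
    (\<lambda>n. frame_weight g m (X n)) \<longlonglongrightarrow> frame_weight g m X0"
  unfolding frame_weight_def csqnorm_def adj_apply_def by (auto intro!: tendsto_intros)

lemma orthonormal_frame_standard: "orthonormal_frame m (\<lambda>a i. if a = i then 1 else 0)"
proof -
  have "frame_mat m (\<lambda>a i. if a = i then 1 else 0) = 1\<^sub>m m"
    by (rule eq_matI) (auto simp: frame_mat_def)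
  moreover have "mat_adj (1\<^sub>m m) = 1\<^sub>m m" by (rule eq_matI) auto
  ultimately show ?thesis by (simp add: orthonormal_frame_iff_unitary unitary_mat_def)
qed

lemma orthonormal_frame_convergent_subseq:
  fixes Fs :: "nat \<Rightarrow> nat \<Rightarrow> nat \<Rightarrow> complex"
  assumes Fs: "\<And>n. orthonormal_frame m (Fs n)"
  shows "\<exists>r F. strict_mono r \<and> orthonormal_frame m F \<and>
           (\<forall>a<m. \<forall>i<m. (\<lambda>n. Fs (r n) a i) \<longlonglongrightarrow> F a i)"
proof -
  define X where "X n p = (case p of (a, i) \<Rightarrow> Fs n a i)" for n p
  have "\<forall>n. \<forall>p\<in>{..<m} \<times> {..<m}. norm (X n p) \<le> 1"
    using orthonormal_frame_entry_le_1[OF Fs] unfolding X_def by auto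
  then obtain r Y where r: "strict_mono r"
    and Y: "\<forall>p\<in>{..<m} \<times> {..<m}. (\<lambda>n. X (r n) p) \<longlonglongrightarrow> Y p"
    using bounded_family_convergent_subseq[of "{..<m} \<times> {..<m}" X 1] by blast
  have conv: "\<forall>a<m. \<forall>i<m. (\<lambda>n. Fs (r n) a i) \<longlonglongrightarrow> Y (a,i)"
    using Y unfolding X_def by auto
  moreover have "orthonormal_frame m (\<lambda>a i. Y (a,i))"
    using Fs conv by (intro orthonormal_frame_limit) auto
  ultimately show ?thesis using r by (intro exI[of _ r] exI[of _ "\<lambda>a i. Y (a,i)"]) simp
qed

lemma frame_weight_attains_max:
  "\<exists>F. orthonormal_frame m F \<and>
     (\<forall>F'. orthonormal_frame m F' \<longrightarrow> frame_weight g m F' \<le> frame_weight g m F)"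
proof -
  define S where "S = frame_weight g m ` {F. orthonormal_frame m F}"
  define s where "s = Sup S"
  have bdd: "bdd_above S" unfolding S_def bdd_above_def using frame_weight_le by blast
  have ne: "S \<noteq> {}" unfolding S_def using orthonormal_frame_standard by blast
  have upper: "frame_weight g m F' \<le> s" if "orthonormal_frame m F'" for F'
    unfolding s_def using bdd that by (intro cSup_upper) (auto simp: S_def)
  have "\<exists>F. orthonormal_frame m F \<and> s - inverse (real (Suc n)) < frame_weight g m F" for n
  proof -
    obtain y where "y \<in> S" "s - inverse (real (Suc n)) < y"
      using less_cSup_iff[OF ne bdd, of "s - inverse (real (Suc n))"] unfolding s_def by auto
    then show ?thesis unfolding S_def by blast
  qed
  then obtain Fs where Fs: "\<And>n. orthonormal_frame m (Fs n)"
    and near: "\<And>n. s - inverse (real (Suc n)) < frame_weight g m (Fs n)"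
    by metis
  obtain r F0 where r: "strict_mono r" and F0: "orthonormal_frame m F0"
    and conv: "\<forall>a<m. \<forall>i<m. (\<lambda>n. Fs (r n) a i) \<longlonglongrightarrow> F0 a i"
    using orthonormal_frame_convergent_subseq[of m Fs, OF Fs] by blast
  have "s \<le> frame_weight g m F0"
  proof (rule LIMSEQ_le)
    show "(\<lambda>n. s - inverse (real (Suc n))) \<longlonglongrightarrow> s"
      using tendsto_diff[OF tendsto_const LIMSEQ_inverse_real_of_nat, of s] by simp
    show "(\<lambda>n. frame_weight g m (Fs (r n))) \<longlonglongrightarrow> frame_weight g m F0"
      using conv by (rule frame_weight_tendsto)
    have "s - inverse (real (Suc n)) \<le> frame_weight g m (Fs (r n))" for n
    proof -
      have "inverse (real (Suc (r n))) \<le> inverse (real (Suc n))"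
        using strict_mono_imp_increasing[OF r, of n] by (simp add: le_imp_inverse_le)
      then show ?thesis using near[of "r n"] by linarith
    qed
    then show "\<exists>N. \<forall>n\<ge>N. s - inverse (real (Suc n)) \<le> frame_weight g m (Fs (r n))" by blast
  qed
  then show ?thesis using F0 upper by (meson order_trans)
qed

lemma frame_with_orthogonal_images:
  "\<exists>F. orthonormal_frame m F \<and>
     (\<forall>a<m. \<forall>b<m. a \<noteq> b \<longrightarrow> cinner m (adj_apply g m (F a)) (adj_apply g m (F b)) = 0)"
proof -
  obtain F where F: "orthonormal_frame m F"
    and max: "\<And>F'. orthonormal_frame m F' \<Longrightarrow> frame_weight g m F' \<le> frame_weight g m F"
    using frame_weight_attains_max by blast
  have "cinner m (adj_apply g m (F a)) (adj_apply g m (F b)) = 0"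
    if ab: "a < m" "b < m" "a \<noteq> b" for a b
  proof (rule ccontr)
    assume "cinner m (adj_apply g m (F a)) (adj_apply g m (F b)) \<noteq> 0"
    then obtain F' where "orthonormal_frame m F'" "frame_weight g m F < frame_weight g m F'"
      using frame_weight_increase[OF F ab] by blast
    with max show False by fastforce
  qed
  with F show ?thesis by blast
qed

lemma unitary_mat_normalized_rows:
  assumes orth: "\<forall>a<m. \<forall>b<m. a \<noteq> b \<longrightarrow> cinner m (y a) (y b) = 0"
    and nz: "\<forall>a<m. 0 < csqnorm m (y a)"
  shows "unitary_mat m (Matrix.mat m m (\<lambda>(a,j). cnj (y a j) / complex_of_real (sqrt (csqnorm m (y a)))))"
    (is "unitary_mat m ?V")
proof -
  define D where "D a = sqrt (csqnorm m (y a))" for a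
  have Vc: "?V \<in> carrier_mat m m" by simp
  have "?V * mat_adj ?V = 1\<^sub>m m"
  proof (rule eq_matI)
    fix a b assume "a < dim_row (1\<^sub>m m)" "b < dim_col (1\<^sub>m m)"
    then have a: "a < m" and b: "b < m" by auto
    have "(?V * mat_adj ?V) $$ (a,b) =
        cinner m (y a) (y b) / (complex_of_real (D a) * complex_of_real (D b))"
      unfolding cinner_def sum_divide_distrib D_def
      by (subst index_mult_mat_sum[of _ m m]) (use a b in \<open>auto intro!: sum.cong\<close>)
    also have "\<dots> = 1\<^sub>m m $$ (a,b)"
    proof (cases "a = b")
      case True
      have "D a * D a = csqnorm m (y a)" unfolding D_def using csqnorm_nonneg by simp
      then have "cinner m (y a) (y b) = complex_of_real (D a) * complex_of_real (D a)"
        unfolding True cinner_self by (metis of_real_mult True)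
      moreover have "D a \<noteq> 0" using a nz unfolding D_def by force
      ultimately show ?thesis using True a by simp
    qed (use orth a b in simp)
    finally show "(?V * mat_adj ?V) $$ (a,b) = 1\<^sub>m m $$ (a,b)" .
  qed (use Vc in auto)
  then show ?thesis
    using unitary_mat_mat_adj[of m "mat_adj ?V"] Vc unfolding unitary_mat_def by simp
qed

lemma singular_value_decomposition:
  assumes g: "g \<in> carrier_mat m m" and dg: "det g \<noteq> 0"
  shows "\<exists>U D V. unitary_mat m U \<and> unitary_mat m V \<and> (\<forall>a<m. 0 < D a) \<and>
           mat_adj U * g = mat_diag m (\<lambda>a. complex_of_real (D a)) * V"
proof -
  obtain F where F: "orthonormal_frame m F" and orth:
      "\<forall>a<m. \<forall>b<m. a \<noteq> b \<longrightarrow> cinner m (adj_apply g m (F a)) (adj_apply g m (F b)) = 0"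
    using frame_with_orthogonal_images by blast
  define U where "U = frame_mat m F"
  define y where "y a = adj_apply g m (F a)" for a
  define D where "D a = sqrt (csqnorm m (y a))" for a
  define V where "V = Matrix.mat m m (\<lambda>(a,j). cnj (y a j) / complex_of_real (D a))"
  have U: "unitary_mat m U" using F unfolding U_def orthonormal_frame_iff_unitary .
  have Uc: "U \<in> carrier_mat m m" and Vc: "V \<in> carrier_mat m m" unfolding U_def V_def by auto
  have yD: "cmod (y a j) \<le> D a" if "j < m" for a j
  proof -
    have "(cmod (y a j))\<^sup>2 \<le> csqnorm m (y a)"
      unfolding csqnorm_def using that by (intro member_le_sum) auto
    then show ?thesis unfolding D_def by (simp add: real_le_rsqrt)
  qed
  have fac: "mat_adj U * g = mat_diag m (\<lambda>a. complex_of_real (D a)) * V"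
  proof (rule eq_matI)
    fix a j assume "a < dim_row (mat_diag m (\<lambda>a. complex_of_real (D a)) * V)"
      "j < dim_col (mat_diag m (\<lambda>a. complex_of_real (D a)) * V)"
    then have a: "a < m" and j: "j < m" using Vc by (auto simp: mat_diag_def)
    have "(mat_adj U * g) $$ (a,j) = cnj (y a j)"
      by (subst index_mult_mat_sum[of _ m m])
        (use a j g Uc in \<open>auto simp: U_def frame_mat_def y_def adj_apply_def cnj_sum mult.commute\<close>)
    also have "\<dots> = (mat_diag m (\<lambda>a. complex_of_real (D a)) * V) $$ (a,j)"
    proof (cases "D a = 0")
      case True
      then have "y a j = 0" using yD[OF j, of a] by simp
      then show ?thesis unfolding index_mat_diag_mult[OF Vc a j] using True by simp
    next
      case False
      show ?thesis unfolding index_mat_diag_mult[OF Vc a j] using False a j by (simp add: V_def)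
    qed
    finally show "(mat_adj U * g) $$ (a,j) = (mat_diag m (\<lambda>a. complex_of_real (D a)) * V) $$ (a,j)" .
  qed (use Uc g Vc in \<open>auto simp: mat_diag_def\<close>)
  have "det U \<noteq> 0" using unitary_mat_det[OF U] by auto
  then have "det (mat_adj U * g) \<noteq> 0"
    using Uc g dg by (simp add: det_mult[of _ m] det_mat_adj)
  then have "complex_of_real (\<Prod>a<m. D a) * det V \<noteq> 0"
    unfolding fac using Vc by (simp add: det_mult[of _ m] det_mat_diag)
  then have Dpos: "\<forall>a<m. 0 < D a"
    unfolding D_def by (auto simp: less_le csqnorm_nonneg)
  then have "unitary_mat m V"
    unfolding V_def D_def using orth unitary_mat_normalized_rows[of m y] by (simp add: y_def)
  with U Dpos fac show ?thesis by blast
qed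

definition sl_svd :: "nat \<Rightarrow> complex mat \<Rightarrow> complex mat \<Rightarrow> (nat \<Rightarrow> real) \<Rightarrow> complex mat \<Rightarrow> bool" where
  "sl_svd m g U D V \<longleftrightarrow> unitary_mat m U \<and> unitary_mat m V \<and> (\<forall>a<m. 0 < D a) \<and>
     (\<Prod>a<m. D a) = 1 \<and> mat_adj U * g = mat_diag m (\<lambda>a. complex_of_real (D a)) * V"

lemma sl_svd_exists:
  assumes g: "g \<in> carrier_mat m m" and dg: "det g = 1"
  shows "\<exists>U D V. sl_svd m g U D V"
proof -
  obtain U D V where U: "unitary_mat m U" and V: "unitary_mat m V" and D: "\<forall>a<m. 0 < D a"
    and fac: "mat_adj U * g = mat_diag m (\<lambda>a. complex_of_real (D a)) * V"
    using singular_value_decomposition[OF g] dg by auto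
  have "U \<in> carrier_mat m m" "V \<in> carrier_mat m m"
    using U V unfolding unitary_mat_def by auto
  then have "cnj (det U) = complex_of_real (\<Prod>a<m. D a) * det V"
    using arg_cong[OF fac, of det] g dg by (simp add: det_mult[of _ m] det_mat_adj det_mat_diag)
  then have "cmod (det U) = \<bar>\<Prod>a<m. D a\<bar> * cmod (det V)"
    by (metis complex_mod_cnj norm_mult norm_of_real)
  moreover have "\<bar>\<Prod>a<m. D a\<bar> = (\<Prod>a<m. D a)"
    by (intro abs_of_nonneg prod_nonneg) (use D in auto)
  ultimately have "(\<Prod>a<m. D a) = 1"
    using unitary_mat_det[OF U] unitary_mat_det[OF V] by simp
  with U V D fac show ?thesis unfolding sl_svd_def by blast
qed

lemma sl_svd_choice:
  assumes "\<forall>n. g n \<in> SLgroup N d"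
  obtains U D V where "\<And>n k. k < N \<Longrightarrow> sl_svd (d k) (g n k) (U n k) (D n k) (V n k)"
proof -
  have "\<forall>n k. \<exists>X. k < N \<longrightarrow> sl_svd (d k) (g n k) (fst X) (fst (snd X)) (snd (snd X))"
    using assms sl_svd_exists unfolding SLgroup_def by fastforce
  then obtain X where
    "\<forall>n k. k < N \<longrightarrow> sl_svd (d k) (g n k) (fst (X n k)) (fst (snd (X n k))) (snd (snd (X n k)))"
    by metis
  then show ?thesis
    by (intro that[of "\<lambda>n k. fst (X n k)" "\<lambda>n k. fst (snd (X n k))" "\<lambda>n k. snd (snd (X n k))"])
      auto
qed

lemma unitary_family_convergent_subseq:
  fixes U :: "nat \<Rightarrow> 'k \<Rightarrow> complex mat"
  assumes K: "finite K" and U: "\<And>n k. k \<in> K \<Longrightarrow> unitary_mat (d k) (U n k)"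
  shows "\<exists>r W. strict_mono r \<and> (\<forall>k\<in>K. unitary_mat (d k) (W k) \<and>
           (\<forall>a<d k. \<forall>b<d k. (\<lambda>n. U (r n) k $$ (a,b)) \<longlonglongrightarrow> W k $$ (a,b)))"
proof -
  define I where "I = Sigma K (\<lambda>k. {..<d k} \<times> {..<d k})"
  define X where "X n p = (case p of (k, a, b) \<Rightarrow> U n k $$ (a,b))" for n p
  have "finite I" unfolding I_def using K by auto
  moreover have "\<forall>n. \<forall>p\<in>I. norm (X n p) \<le> 1"
    using unitary_mat_entry_le_1[OF U] unfolding I_def X_def by auto
  ultimately obtain r Y where r: "strict_mono r" and Y: "\<forall>p\<in>I. (\<lambda>n. X (r n) p) \<longlonglongrightarrow> Y p"
    using bounded_family_convergent_subseq[of I X 1] by blast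
  define W where "W k = Matrix.mat (d k) (d k) (\<lambda>(a,b). Y (k,a,b))" for k
  have lim: "\<forall>a<d k. \<forall>b<d k. (\<lambda>n. U (r n) k $$ (a,b)) \<longlonglongrightarrow> W k $$ (a,b)" if "k \<in> K" for k
    using Y that unfolding I_def W_def X_def by auto
  have "unitary_mat (d k) (W k)" if "k \<in> K" for k
    using U[OF that] lim[OF that] by (intro unitary_mat_limit) (auto simp: W_def)
  with r lim show ?thesis by blast
qed

section \<open>The tensor action and the null cone\<close>

lemma act_outside_midx [simp]: "i \<notin> midx N d \<Longrightarrow> act N d g \<psi> i = 0"
  by (simp add: act_def)

lemma act_cong: "(\<And>k. k < N \<Longrightarrow> g k = h k) \<Longrightarrow> act N d g = act N d h"
  unfolding act_def by (intro ext if_cong refl sum.cong arg_cong2[where f = "(*)"] prod.cong) auto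

lemma act_scale: "act N d g (\<lambda>i. c * \<psi> i) = (\<lambda>i. c * act N d g \<psi> i)"
  by (auto simp: act_def sum_distrib_left mult.left_commute)

lemma act_act:
  assumes g: "\<forall>k<N. g k \<in> carrier_mat (d k) (d k)" and h: "\<forall>k<N. h k \<in> carrier_mat (d k) (d k)"
  shows "act N d g (act N d h \<psi>) = act N d (\<lambda>k. g k * h k) \<psi>"
proof
  fix i
  show "act N d g (act N d h \<psi>) i = act N d (\<lambda>k. g k * h k) \<psi> i"
  proof (cases "i \<in> midx N d")
    case True
    have "act N d g (act N d h \<psi>) i = (\<Sum>j\<in>midx N d. \<Sum>l\<in>midx N d.
        (\<Prod>k<N. g k $$ (i k, j k)) * (\<Prod>k<N. h k $$ (j k, l k)) * \<psi> l)"
      using True unfolding act_def by (simp add: sum_distrib_left mult.assoc)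
    also have "\<dots> = (\<Sum>l\<in>midx N d. \<Sum>j\<in>midx N d.
        (\<Prod>k<N. g k $$ (i k, j k) * h k $$ (j k, l k)) * \<psi> l)"
      by (subst sum.swap) (simp add: prod.distrib)
    also have "\<dots> = (\<Sum>l\<in>midx N d.
        (\<Sum>j\<in>midx N d. \<Prod>k<N. g k $$ (i k, j k) * h k $$ (j k, l k)) * \<psi> l)"
      by (simp add: sum_distrib_right)
    also have "\<dots> = (\<Sum>l\<in>midx N d. (\<Prod>k<N. (g k * h k) $$ (i k, l k)) * \<psi> l)"
    proof (intro sum.cong refl arg_cong2[where f = "(*)"])
      fix l assume l: "l \<in> midx N d"
      have "(\<Prod>k<N. (g k * h k) $$ (i k, l k)) = (\<Prod>k<N. \<Sum>c<d k. g k $$ (i k, c) * h k $$ (c, l k))"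
        using g h True l unfolding midx_def by (intro prod.cong refl index_mult_mat_sum) auto
      then show "(\<Sum>j\<in>midx N d. \<Prod>k<N. g k $$ (i k, j k) * h k $$ (j k, l k)) =
          (\<Prod>k<N. (g k * h k) $$ (i k, l k))"
        by (simp add: prod_sum_midx)
    qed
    finally show ?thesis using True by (simp add: act_def)
  qed simp
qed

lemma act_mat_diag_mult:
  assumes V: "\<forall>k<N. V k \<in> carrier_mat (d k) (d k)" and i: "i \<in> midx N d"
  shows "act N d (\<lambda>k. mat_diag (d k) (e k) * V k) \<psi> i = (\<Prod>k<N. e k (i k)) * act N d V \<psi> i"
proof -
  have entry: "(mat_diag (d k) (e k) * V k) $$ (i k, j k) = e k (i k) * V k $$ (i k, j k)"
    if "k < N" "j \<in> midx N d" for k j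
    using V i that unfolding midx_def by (intro index_mat_diag_mult) auto
  have "act N d (\<lambda>k. mat_diag (d k) (e k) * V k) \<psi> i =
      (\<Sum>j\<in>midx N d. (\<Prod>k<N. e k (i k) * V k $$ (i k, j k)) * \<psi> j)"
    using i unfolding act_def by (auto intro!: sum.cong prod.cong simp: entry)
  also have "\<dots> = (\<Prod>k<N. e k (i k)) * act N d V \<psi> i"
    using i by (simp add: act_def prod.distrib sum_distrib_left mult.assoc)
  finally show ?thesis .
qed

lemma act_norm_le:
  assumes "\<forall>k<N. \<forall>a<d k. \<forall>b<d k. cmod (V k $$ (a,b)) \<le> 1"
  shows "cmod (act N d V \<psi> i) \<le> (\<Sum>j\<in>midx N d. cmod (\<psi> j))"
proof (cases "i \<in> midx N d")
  case True
  have "cmod (act N d V \<psi> i) \<le> (\<Sum>j\<in>midx N d. cmod ((\<Prod>k<N. V k $$ (i k, j k)) * \<psi> j))"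
    using True unfolding act_def by (simp add: norm_sum)
  also have "\<dots> \<le> (\<Sum>j\<in>midx N d. cmod (\<psi> j))"
  proof (rule sum_mono)
    fix j assume j: "j \<in> midx N d"
    have "(\<Prod>k<N. cmod (V k $$ (i k, j k))) \<le> 1"
      using True j assms unfolding midx_def by (intro prod_le_1) auto
    then show "cmod ((\<Prod>k<N. V k $$ (i k, j k)) * \<psi> j) \<le> cmod (\<psi> j)"
      by (simp add: norm_mult prod_norm mult_left_le_one_le)
  qed
  finally show ?thesis .
qed (simp add: sum_nonneg)

lemma act_tendsto:
  assumes "\<forall>k<N. \<forall>a<d k. \<forall>b<d k. ((\<lambda>n. G n k $$ (a,b)) \<longlongrightarrow> H k $$ (a,b)) F"
    and "\<forall>j. ((\<lambda>n. X n j) \<longlongrightarrow> Y j) F"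
  shows "((\<lambda>n. act N d (G n) (X n) i) \<longlongrightarrow> act N d H Y i) F"
proof (cases "i \<in> midx N d")
  case True
  then show ?thesis
    unfolding act_def using assms by (auto intro!: tendsto_sum tendsto_mult tendsto_prod simp: midx_def)
qed simp

lemma tnorm_nonneg: "0 \<le> tnorm N d x"
  unfolding tnorm_def by (simp add: sum_nonneg)

lemma tnorm_tendsto_0:
  assumes "\<forall>i\<in>midx N d. ((\<lambda>n. x n i) \<longlongrightarrow> 0) F"
  shows "((\<lambda>n. tnorm N d (x n)) \<longlongrightarrow> 0) F"
proof -
  have "((\<lambda>n. \<Sum>i\<in>midx N d. (cmod (x n i))\<^sup>2) \<longlongrightarrow> (\<Sum>i\<in>midx N d. (cmod 0)\<^sup>2)) F"
    using assms by (intro tendsto_intros) auto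
  then show ?thesis unfolding tnorm_def using tendsto_real_sqrt by fastforce
qed

lemma null_coneI_sequence:
  assumes "L \<in> tensor_space N d" and "\<forall>n. h n \<in> SLgroup N d"
    and "(\<lambda>n. tnorm N d (act N d (h n) L)) \<longlonglongrightarrow> 0"
  shows "L \<in> null_cone N d"
  unfolding null_cone_def
proof (intro CollectI conjI allI impI)
  fix e :: real assume "e > 0"
  then have "\<forall>\<^sub>F n in sequentially. tnorm N d (act N d (h n) L) < e"
    using order_tendstoD(2)[OF assms(3)] by blast
  then obtain n where "tnorm N d (act N d (h n) L) < e"
    unfolding eventually_sequentially by auto
  then show "\<exists>g\<in>SLgroup N d. tnorm N d (act N d g L) < e" using assms(2) by blast
qed (rule assms(1))

text \<open>D^-1 W with its first row also divided by det W, so that the determinant is one whenever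
m > 0 and the product of the D a is one.\<close>

definition diag_inv_scale :: "nat \<Rightarrow> (nat \<Rightarrow> real) \<Rightarrow> complex mat \<Rightarrow> complex mat" where
  "diag_inv_scale m D W =
     mat_diag m (\<lambda>a. (if a = 0 then inverse (det W) else 1) / complex_of_real (D a)) * W"

lemma diag_inv_scale_carrier: "W \<in> carrier_mat m m \<Longrightarrow> diag_inv_scale m D W \<in> carrier_mat m m"
  unfolding diag_inv_scale_def by (intro mult_carrier_mat) auto

lemma det_diag_inv_scale:
  assumes "0 < m" "W \<in> carrier_mat m m" "det W \<noteq> 0" "(\<Prod>a<m. D a) = 1"
  shows "det (diag_inv_scale m D W) = 1"
proof -
  have "(\<Prod>a<m. (if a = 0 then inverse (det W) else 1) / complex_of_real (D a)) = inverse (det W)"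
    using assms unfolding prod_dividef by (simp flip: of_real_prod)
  then show ?thesis
    unfolding diag_inv_scale_def using assms by (simp add: det_mult[of _ m] det_mat_diag)
qed

lemma act_diag_inv_scale_norm:
  assumes W: "\<forall>k<N. W k \<in> carrier_mat (d k) (d k) \<and> cmod (det (W k)) = 1"
    and D: "\<forall>k<N. \<forall>a<d k. 0 < D k a" and i: "i \<in> midx N d"
  shows "cmod (act N d (\<lambda>k. diag_inv_scale (d k) (D k) (W k)) L i) =
           cmod (act N d W L i) / (\<Prod>k<N. D k (i k))"
proof -
  define e where "e k a = (if a = 0 then inverse (det (W k)) else 1) / complex_of_real (D k a)"
    for k a
  have e_norm: "cmod (e k (i k)) = 1 / D k (i k)" if "k < N" for k
  proof -
    have "0 < D k (i k)" using D i that unfolding midx_def by blast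
    moreover have "cmod (det (W k)) = 1" using W that by blast
    ultimately show ?thesis unfolding e_def by (simp add: norm_divide norm_inverse)
  qed
  have "cmod (\<Prod>k<N. e k (i k)) = (\<Prod>k<N. 1 / D k (i k))"
    unfolding prod_norm[symmetric] by (intro prod.cong refl) (simp add: e_norm)
  then have "cmod (\<Prod>k<N. e k (i k)) = 1 / (\<Prod>k<N. D k (i k))"
    by (simp add: prod_dividef)
  moreover have "act N d (\<lambda>k. diag_inv_scale (d k) (D k) (W k)) L i =
      (\<Prod>k<N. e k (i k)) * act N d W L i"
    unfolding diag_inv_scale_def e_def using W i by (intro act_mat_diag_mult) auto
  ultimately show ?thesis by (simp add: norm_mult)
qed

lemma null_coneI_diag_scaling:
  assumes L: "L \<in> tensor_space N d" and d: "\<forall>k<N. 0 < d k"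
    and W: "\<forall>k<N. W k \<in> carrier_mat (d k) (d k) \<and> cmod (det (W k)) = 1"
    and D: "\<And>n k. k < N \<Longrightarrow> (\<forall>a<d k. 0 < D n k a) \<and> (\<Prod>a<d k. D n k a) = 1"
    and eps: "\<epsilon> \<longlonglongrightarrow> 0"
    and small: "\<And>i. i \<in> midx N d \<Longrightarrow> act N d W L i \<noteq> 0 \<Longrightarrow>
       \<forall>\<^sub>F n in sequentially. cmod (act N d W L i) \<le> \<epsilon> n * (\<Prod>k<N. D n k (i k))"
  shows "L \<in> null_cone N d"
proof -
  define h where "h n k = diag_inv_scale (d k) (D n k) (W k)" for n k
  have h: "h n \<in> SLgroup N d" for n
    unfolding SLgroup_def h_def
  proof (intro CollectI allI impI conjI)
    fix k assume k: "k < N"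
    then have "det (W k) \<noteq> 0" using W by auto
    then show "det (diag_inv_scale (d k) (D n k) (W k)) = 1"
      using d W D[OF k] k by (intro det_diag_inv_scale) auto
  qed (use W in \<open>auto intro: diag_inv_scale_carrier\<close>)
  have Dn: "\<forall>k<N. \<forall>a<d k. 0 < D n k a" for n using D by blast
  have "(\<lambda>n. act N d (h n) L i) \<longlonglongrightarrow> 0" if i: "i \<in> midx N d" for i
  proof (cases "act N d W L i = 0")
    case True
    have "act N d (h n) L i = 0" for n
      using act_diag_inv_scale_norm[OF W Dn[of n] i, where L = L] True unfolding h_def by simp
    then show ?thesis by simp
  next
    case False
    from small[OF i False] have "\<forall>\<^sub>F n in sequentially. norm (act N d (h n) L i) \<le> \<bar>\<epsilon> n\<bar>"
    proof eventually_elim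
      case (elim n)
      have "(\<Prod>k<N. D n k (i k)) > 0"
        using D i unfolding midx_def by (auto intro!: prod_pos)
      then have "cmod (act N d (h n) L i) \<le> \<epsilon> n"
        unfolding h_def act_diag_inv_scale_norm[OF W Dn i] using elim
        by (simp add: pos_divide_le_eq)
      then show ?case by linarith
    qed
    then show ?thesis using tendsto_rabs_zero[OF eps] by (rule Lim_null_comparison)
  qed
  then show ?thesis
    using L h by (intro null_coneI_sequence tnorm_tendsto_0) auto
qed

lemma act_sl_svd_norm_le:
  assumes g: "g \<in> SLgroup N d"
    and svd: "\<And>k. k < N \<Longrightarrow> sl_svd (d k) (g k) (U k) (D k) (V k)"
    and i: "i \<in> midx N d"
  shows "cmod (act N d (\<lambda>k. mat_adj (U k)) (act N d g \<Psi>) i) \<le>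
           (\<Prod>k<N. D k (i k)) * (\<Sum>j\<in>midx N d. cmod (\<Psi> j))"
proof -
  have carrier: "\<forall>k<N. U k \<in> carrier_mat (d k) (d k) \<and> V k \<in> carrier_mat (d k) (d k)"
    using svd unfolding sl_svd_def unitary_mat_def by auto
  have "act N d (\<lambda>k. mat_adj (U k)) (act N d g \<Psi>) i = act N d (\<lambda>k. mat_adj (U k) * g k) \<Psi> i"
    using carrier g unfolding SLgroup_def by (subst act_act) auto
  also have "\<dots> = act N d (\<lambda>k. mat_diag (d k) (\<lambda>a. complex_of_real (D k a)) * V k) \<Psi> i"
    using svd unfolding sl_svd_def by (simp cong: act_cong)
  also have "\<dots> = (\<Prod>k<N. complex_of_real (D k (i k))) * act N d V \<Psi> i"
    using carrier i by (simp add: act_mat_diag_mult)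
  finally have "act N d (\<lambda>k. mat_adj (U k)) (act N d g \<Psi>) i =
      complex_of_real (\<Prod>k<N. D k (i k)) * act N d V \<Psi> i"
    by simp
  moreover have PD: "(\<Prod>k<N. D k (i k)) > 0"
    using svd i unfolding sl_svd_def midx_def by (auto intro!: prod_pos)
  moreover have "cmod (act N d V \<Psi> i) \<le> (\<Sum>j\<in>midx N d. cmod (\<Psi> j))"
    using svd unitary_mat_entry_le_1 unfolding sl_svd_def by (intro act_norm_le) blast
  ultimately show ?thesis by (simp add: norm_mult abs_of_pos mult_left_mono del: of_real_prod)
qed

lemma scaled_orbit_limit_in_null_cone:
  assumes d: "\<forall>k<N. 0 < d k" and g: "\<forall>n. g n \<in> SLgroup N d"
    and c: "(\<lambda>n. cmod (c n)) \<longlonglongrightarrow> 0"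
    and L: "\<And>i. (\<lambda>n. c n * act N d (g n) \<Psi> i) \<longlonglongrightarrow> L i"
  shows "L \<in> null_cone N d"
proof -
  obtain U D V where svd: "\<And>n k. k < N \<Longrightarrow> sl_svd (d k) (g n k) (U n k) (D n k) (V n k)"
    using sl_svd_choice[OF g] by blast
  then have "\<And>n k. k \<in> {..<N} \<Longrightarrow> unitary_mat (d k) (U n k)" unfolding sl_svd_def by simp
  from unitary_family_convergent_subseq[of "{..<N}" d U, OF finite_lessThan this]
  obtain r W where r: "strict_mono r" and UW: "\<forall>k\<in>{..<N}. unitary_mat (d k) (W k) \<and>
      (\<forall>a<d k. \<forall>b<d k. (\<lambda>n. U (r n) k $$ (a,b)) \<longlonglongrightarrow> W k $$ (a,b))"
    by blast
  define C where "C = (\<Sum>j\<in>midx N d. cmod (\<Psi> j))"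
  define x where "x n = act N d (\<lambda>k. mat_adj (U n k)) (\<lambda>i. c n * act N d (g n) \<Psi> i)" for n
  have x_le: "cmod (x n i) \<le> cmod (c n) * ((\<Prod>k<N. D n k (i k)) * C)"
    if "i \<in> midx N d" for n i
    unfolding x_def act_scale C_def using act_sl_svd_norm_le[OF g[rule_format] svd that]
    by (simp add: norm_mult mult_left_mono)
  have x_lim: "(\<lambda>n. x (r n) i) \<longlonglongrightarrow> act N d (\<lambda>k. mat_adj (W k)) L i" for i
    unfolding x_def
  proof (rule act_tendsto)
    show "\<forall>k<N. \<forall>a<d k. \<forall>b<d k. (\<lambda>n. mat_adj (U (r n) k) $$ (a,b)) \<longlonglongrightarrow> mat_adj (W k) $$ (a,b)"
      using UW svd tendsto_index_mat_adj[of "\<lambda>n. U (r n) _"] unfolding sl_svd_def unitary_mat_def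
      by blast
    show "\<forall>j. (\<lambda>n. c (r n) * act N d (g (r n)) \<Psi> j) \<longlonglongrightarrow> L j"
      using LIMSEQ_subseq_LIMSEQ[OF L r] by (simp add: o_def)
  qed
  show ?thesis
  proof (rule null_coneI_diag_scaling[where W = "\<lambda>k. mat_adj (W k)" and D = "\<lambda>n. D (r n)"
        and \<epsilon> = "\<lambda>n. 2 * C * cmod (c (r n))"])
    show "L \<in> tensor_space N d"
      unfolding tensor_space_def
    proof (intro CollectI allI impI)
      fix i assume "i \<notin> midx N d"
      then have "(\<lambda>n. c n * act N d (g n) \<Psi> i) \<longlonglongrightarrow> 0" by simp
      with L[of i] show "L i = 0" by (rule LIMSEQ_unique)
    qed
    show "\<forall>k<N. mat_adj (W k) \<in> carrier_mat (d k) (d k) \<and> cmod (det (mat_adj (W k))) = 1"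
      using UW unitary_mat_mat_adj unitary_mat_det unfolding unitary_mat_def by blast
    show "(\<lambda>n. 2 * C * cmod (c (r n))) \<longlonglongrightarrow> 0"
      using LIMSEQ_subseq_LIMSEQ[OF c r] by (auto simp: o_def intro: tendsto_mult_right_zero)
    fix i assume i: "i \<in> midx N d" and nz: "act N d (\<lambda>k. mat_adj (W k)) L i \<noteq> 0"
    have "\<forall>\<^sub>F n in sequentially. cmod (act N d (\<lambda>k. mat_adj (W k)) L i) / 2 < cmod (x (r n) i)"
      using nz by (intro order_tendstoD(1)[OF tendsto_norm[OF x_lim]]) simp
    then show "\<forall>\<^sub>F n in sequentially. cmod (act N d (\<lambda>k. mat_adj (W k)) L i) \<le>
        2 * C * cmod (c (r n)) * (\<Prod>k<N. D (r n) k (i k))"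
    proof eventually_elim
      case (elim n)
      with x_le[OF i, of "r n"] show ?case by (simp add: mult_ac)
    qed
  qed (use d svd in \<open>auto simp: sl_svd_def\<close>)
qed

theorem lemma5:
  fixes N :: nat and d :: "nat \<Rightarrow> nat"
    and \<Psi> :: "(nat \<Rightarrow> nat) \<Rightarrow> complex"
    and g :: "nat \<Rightarrow> nat \<Rightarrow> complex mat"
    and \<phi> :: "nat \<Rightarrow> real"
    and L :: "(nat \<Rightarrow> nat) \<Rightarrow> complex"
  assumes "\<forall>k<N. d k \<ge> 2"
    and "semistable N d \<Psi>"
    and "\<forall>n. g n \<in> SLgroup N d"
    and "filterlim (\<lambda>n. tnorm N d (act N d (g n) \<Psi>)) at_top sequentially"
    and "(\<lambda>n. (\<lambda>i. act N d (g n) \<Psi> i / complex_of_real (tnorm N d (act N d (g n) \<Psi>))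
                  * cis (\<phi> n))) \<longlonglongrightarrow> L"
  shows "L \<in> null_cone N d"
proof -
  define c where "c n = cis (\<phi> n) / complex_of_real (tnorm N d (act N d (g n) \<Psi>))" for n
  have "cmod (c n) = inverse (tnorm N d (act N d (g n) \<Psi>))" for n
    unfolding c_def using tnorm_nonneg[of N d "act N d (g n) \<Psi>"]
    by (simp add: norm_divide divide_inverse norm_mult norm_inverse)
  then have "(\<lambda>n. cmod (c n)) \<longlonglongrightarrow> 0"
    using tendsto_inverse_0_at_top[OF assms(4)] by simp
  moreover have "(\<lambda>n. c n * act N d (g n) \<Psi> i) \<longlonglongrightarrow> L i" for i
    using continuous_on_tendsto_compose[OF continuous_on_product_coordinates assms(5)]
    by (simp add: c_def mult_ac)
  ultimately show ?thesis
    using assms(1,3) by (intro scaled_orbit_limit_in_null_cone) auto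
qed

end
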